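(* Let $T\in\mathbf B_m(\Omega)$ with $0\in\Omega$, let $S\in\{T\}'$ and $n\ge1$. Then $S|_{\ker T^n}=0$ if and only if $\widetilde\Phi_S(\lambda)=\lambda^n\Psi(\lambda)$ for some $m\times m$ matrix-valued function $\Psi$ analytic in a neighbourhood of $0$.
   Context: $\mathcal H$ is a complex separable Hilbert space. For a connected open $\Omega\subset\mathbb C$ and integer $m\ge1$, $\mathbf B_m(\Omega)$ is the set of $T\in\mathcal B(\mathcal H)$ with: $\Omega\subset\sigma(T)$; $\operatorname{Ran}(T-w)=\mathcal H$ for $w\in\Omega$; $\bigvee_{w\in\Omega}\ker(T-w)=\mathcal H$; $\dim\ker(T-w)=m$ for $w\in\Omega$. $\mathcal N_\lambda=\ker(T-\lambda)$. Fix holomorphic $\gamma_1,\dots,\gamma_m:\Omega\to\mathcal H$ with $\{\gamma_j(\lambda)\}$ a basis of $\mathcal N_\lambda$ for each $\lambda$, and $\rho(\lambda):\mathbb C^m\to\mathcal N_\lambda$, $\rho(\lambda)e_j=\gamma_j(\lambda)$. $\{T\}'$ is the commutant of $T$; for $S\in\{T\}'$, $\Phi_S(\lambda)=S|_{\mathcal N_\lambda}:\mathcal N_\lambda\to\mathcal N_\lambda$, and $\widetilde\Phi_S(\lambda)=\rho(\lambda)^{-1}\Phi_S(\lambda)\rho(\lambda)$, an analytic $m\times m$ matrix function on $\Omega$ (so $S\rho(\lambda)=\rho(\lambda)\widetilde\Phi_S(\lambda)$). *)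

theory Defs
  imports "HOL-Analysis.Analysis"
begin

text \<open>A complex separable Hilbert space, carried by a type 'a of class banach
(which supplies the norm, metric, topology and completeness), together with a
complex scalar multiplication sc extending the real one and an inner product ip
inducing the norm.\<close>

definition complex_hilbert :: "(complex \<Rightarrow> 'a::banach \<Rightarrow> 'a) \<Rightarrow> ('a \<Rightarrow> 'a \<Rightarrow> complex) \<Rightarrow> bool" where
  "complex_hilbert sc ip \<longleftrightarrow>
     vector_space sc \<and>
     (\<forall>r x. sc (complex_of_real r) x = r *\<^sub>R x) \<and>
     (\<forall>x y z. ip (x + y) z = ip x z + ip y z) \<and>
     (\<forall>c x y. ip (sc c x) y = c * ip x y) \<and>
     (\<forall>x y. ip y x = cnj (ip x y)) \<and>
     (\<forall>x. norm x = sqrt (Re (ip x x)))"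

definition separable_sp :: "'a::metric_space itself \<Rightarrow> bool" where
  "separable_sp _ \<longleftrightarrow> (\<exists>D::'a set. countable D \<and> closure D = UNIV)"

definition bdd_op :: "(complex \<Rightarrow> 'a::banach \<Rightarrow> 'a) \<Rightarrow> ('a \<Rightarrow> 'a) \<Rightarrow> bool" where
  "bdd_op sc T \<longleftrightarrow> bounded_linear T \<and> (\<forall>c x. T (sc c x) = sc c (T x))"

definition shift_op :: "(complex \<Rightarrow> 'a::banach \<Rightarrow> 'a) \<Rightarrow> ('a \<Rightarrow> 'a) \<Rightarrow> complex \<Rightarrow> 'a \<Rightarrow> 'a" where
  "shift_op sc T w = (\<lambda>x. T x - sc w x)"

definition op_ker :: "('a \<Rightarrow> 'b::zero) \<Rightarrow> 'a set" where
  "op_ker A = {x. A x = 0}"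

definition op_spectrum :: "(complex \<Rightarrow> 'a::banach \<Rightarrow> 'a) \<Rightarrow> ('a \<Rightarrow> 'a) \<Rightarrow> complex set" where
  "op_spectrum sc T = {w. \<not> (\<exists>R. bdd_op sc R \<and> R \<circ> shift_op sc T w = id \<and> shift_op sc T w \<circ> R = id)}"

definition cowen_douglas :: "(complex \<Rightarrow> 'a::banach \<Rightarrow> 'a) \<Rightarrow> 'm::finite itself \<Rightarrow> complex set \<Rightarrow> ('a \<Rightarrow> 'a) \<Rightarrow> bool" where
  "cowen_douglas sc _ \<Omega> T \<longleftrightarrow>
     bdd_op sc T \<and>
     \<Omega> \<subseteq> op_spectrum sc T \<and>
     (\<forall>w\<in>\<Omega>. range (shift_op sc T w) = UNIV) \<and>
     closure (module.span sc (\<Union>w\<in>\<Omega>. op_ker (shift_op sc T w))) = UNIV \<and>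
     (\<forall>w\<in>\<Omega>. vector_space.dim sc (op_ker (shift_op sc T w)) = CARD('m))"

definition vholo_on :: "(complex \<Rightarrow> 'a::banach \<Rightarrow> 'a) \<Rightarrow> (complex \<Rightarrow> 'a) \<Rightarrow> complex set \<Rightarrow> bool" where
  "vholo_on sc g U \<longleftrightarrow>
     (\<forall>z\<in>U. \<exists>d. ((\<lambda>h. sc (1 / h) (g (z + h) - g z)) \<longlongrightarrow> d) (at 0))"

definition rho :: "(complex \<Rightarrow> 'a::banach \<Rightarrow> 'a) \<Rightarrow> ('m::finite \<Rightarrow> complex \<Rightarrow> 'a) \<Rightarrow> complex \<Rightarrow> complex^'m \<Rightarrow> 'a" where
  "rho sc \<gamma> z v = (\<Sum>j\<in>UNIV. sc (v $ j) (\<gamma> j z))"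

definition PhiT :: "(complex \<Rightarrow> 'a::banach \<Rightarrow> 'a) \<Rightarrow> ('m::finite \<Rightarrow> complex \<Rightarrow> 'a) \<Rightarrow> ('a \<Rightarrow> 'a) \<Rightarrow> complex \<Rightarrow> complex^'m^'m" where
  "PhiT sc \<gamma> S z = (THE M. \<forall>v. S (rho sc \<gamma> z v) = rho sc \<gamma> z (M *v v))"

end

theory Submission
  imports Defs
begin

text \<open>Write \<open>\<Phi>\<^sub>S(w)\<close> for the matrix of \<open>S\<close> in the eigenvector frame \<open>\<gamma>(w)\<close>. If \<open>S\<close> kills
\<open>ker T\<^sup>n\<close> then, \<open>T\<close> being onto, \<open>S = R T\<^sup>n\<close> for an operator \<open>R\<close> commuting with \<open>T\<close> that is
bounded by the open mapping theorem. As \<open>T \<gamma>(w) = w \<gamma>(w)\<close>, this gives \<open>\<Phi>\<^sub>S(w) = w\<^sup>n \<Phi>\<^sub>R(w)\<close>, and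
\<open>\<Phi>\<^sub>R\<close> is holomorphic near \<open>0\<close>: pairing \<open>R \<gamma>(w) = \<gamma>(w) \<Phi>\<^sub>R(w)\<close> with the fixed frame \<open>\<gamma>(0)\<close>
yields a linear system for \<open>\<Phi>\<^sub>R(w)\<close> with holomorphic coefficients, invertible at \<open>w = 0\<close>,
which Cramer's rule solves. Conversely, \<open>\<Phi>\<^sub>S(w) = w\<^sup>n \<Psi>(w)\<close> forces \<open>\<Phi>\<^sub>S(0) = 0\<close>, so \<open>S\<close> kills
\<open>ker T = \<gamma>(0) \<complex>\<^sup>m\<close> and \<open>S = R T\<close>; then \<open>\<Phi>\<^sub>R(w) = w\<^sup>n\<^sup>-\<^sup>1 \<Psi>(w)\<close> for \<open>w \<noteq> 0\<close>, hence also at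
\<open>w = 0\<close> by continuity, and induction on \<open>n\<close> concludes.\<close>

section \<open>The open mapping theorem\<close>

lemma surj_closure_image_ball_interior_nonempty:
  fixes f :: "'a::real_normed_vector \<Rightarrow> 'b::banach"
  assumes "surj f"
  shows "\<exists>k::nat. interior (closure (f ` ball 0 (real k))) \<noteq> {}"
proof (rule ccontr)
  assume "\<not> ?thesis"
  hence empty: "\<And>k::nat. interior (closure (f ` ball 0 (real k))) = {}" by blast
  let ?G = "range (\<lambda>k::nat. closure (f ` ball 0 (real k)))"
  have "euclidean interior_of \<Union>?G = {}"
  proof (rule Baire_category_alt)
    show "completely_metrizable_space (euclidean::'b topology) \<or>
      locally_compact_space (euclidean::'b topology) \<and> regular_space (euclidean::'b topology)"
      using completely_metrizable_space_euclidean by blast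
    show "countable ?G" by simp
    fix C assume "C \<in> ?G"
    then show "closedin euclidean C \<and> euclidean interior_of C = {}"
      using empty by auto
  qed
  moreover have "\<Union>?G = UNIV"
  proof -
    have "y \<in> \<Union>?G" for y
    proof -
      obtain x where x: "y = f x" using assms by (metis surjD)
      obtain k::nat where "norm x < real k" using reals_Archimedean2 by blast
      hence "y \<in> closure (f ` ball 0 (real k))" using x closure_subset by fastforce
      thus ?thesis by blast
    qed
    thus ?thesis by blast
  qed
  ultimately show False by simp
qed

lemma approx_preimage_from_ball_in_closure:
  fixes f :: "'a::real_normed_vector \<Rightarrow> 'b::real_normed_vector"
  assumes f: "linear f" and ball: "ball y0 \<epsilon> \<subseteq> closure (f ` ball 0 r)"
    and y: "norm y < \<epsilon>" and \<delta>: "\<delta> > 0"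
  shows "\<exists>x. norm x < 2 * r \<and> norm (y - f x) < \<delta>"
proof -
  have "\<epsilon> > 0" using le_less_trans[OF norm_ge_zero y] .
  hence "y0 \<in> ball y0 \<epsilon>" "y0 + y \<in> ball y0 \<epsilon>" using y by (simp_all add: dist_norm)
  hence "y0 \<in> closure (f ` ball 0 r)" "y0 + y \<in> closure (f ` ball 0 r)" using ball by blast+
  hence "\<exists>z\<in>f ` ball 0 r. dist z y0 < \<delta>/2" "\<exists>z\<in>f ` ball 0 r. dist z (y0 + y) < \<delta>/2"
    using closure_approachable \<delta> half_gt_zero by blast+
  then obtain a b where a: "a \<in> ball 0 r" "dist (f a) y0 < \<delta>/2"
    and b: "b \<in> ball 0 r" "dist (f b) (y0 + y) < \<delta>/2" by blast
  have "norm (b - a) \<le> norm b + norm a" by (rule norm_triangle_ineq4)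
  also have "\<dots> < 2 * r" using a b by simp
  finally have "norm (b - a) < 2 * r" .
  moreover have "y - f (b - a) = (y0 + y - f b) - (y0 - f a)"
    by (simp add: linear_diff[OF f] algebra_simps)
  hence "norm (y - f (b - a)) \<le> norm (y0 + y - f b) + norm (y0 - f a)"
    by (metis norm_triangle_ineq4)
  hence "norm (y - f (b - a)) < \<delta>"
    using a(2) b(2) by (simp add: dist_norm norm_minus_commute)
  ultimately show ?thesis by blast
qed

lemma surj_linear_approx_preimage:
  fixes f :: "'a::real_normed_vector \<Rightarrow> 'b::banach"
  assumes f: "linear f" and "surj f"
  shows "\<exists>M>0. \<forall>y \<delta>. \<delta> > 0 \<longrightarrow> (\<exists>x. norm x \<le> M * norm y \<and> norm (y - f x) < \<delta>)"
proof -
  obtain k::nat where "interior (closure (f ` ball 0 (real k))) \<noteq> {}"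
    using surj_closure_image_ball_interior_nonempty assms by blast
  then obtain y0 \<epsilon> where \<epsilon>: "\<epsilon> > 0" "ball y0 \<epsilon> \<subseteq> closure (f ` ball 0 (real k))"
    by (meson equals0I open_contains_ball open_interior interior_subset subset_trans)
  define M where "M = 4 * real k / \<epsilon> + 1"
  have M: "M > 0" "4 * real k / \<epsilon> \<le> M" using \<epsilon> by (simp_all add: M_def add_nonneg_pos)
  have "\<exists>x. norm x \<le> M * norm y \<and> norm (y - f x) < \<delta>" if \<delta>: "\<delta> > 0" for y \<delta>
  proof (cases "y = 0")
    case True thus ?thesis using \<delta> by (intro exI[of _ 0]) (simp add: linear_0[OF f])
  next
    case False
    \<comment> \<open>rescale \<open>y\<close> into the ball of radius \<open>\<epsilon>\<close>, approximate there, and scale back\<close>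
    define t where "t = \<epsilon> / (2 * norm y)"
    have t: "t > 0" "norm (t *\<^sub>R y) < \<epsilon>" using False \<epsilon> by (simp_all add: t_def)
    then obtain x' where x': "norm x' < 2 * real k" "norm (t *\<^sub>R y - f x') < t * \<delta>"
      using approx_preimage_from_ball_in_closure[OF f \<epsilon>(2)] \<delta> by (meson mult_pos_pos)
    define x where "x = (1/t) *\<^sub>R x'"
    have "norm x = norm x' / t" using t by (simp add: x_def)
    also have "\<dots> \<le> 2 * real k / t" using x' t by (simp add: divide_right_mono)
    also have "\<dots> = 4 * real k / \<epsilon> * norm y" using False \<epsilon> by (simp add: t_def field_simps)
    also have "\<dots> \<le> M * norm y" by (rule mult_right_mono[OF M(2) norm_ge_zero])
    finally have "norm x \<le> M * norm y" .
    moreover have "y - f x = (1/t) *\<^sub>R (t *\<^sub>R y - f x')"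
      using t by (simp add: x_def linear_scale[OF f] algebra_simps)
    hence "norm (y - f x) = norm (t *\<^sub>R y - f x') / t" using t by simp
    hence "norm (y - f x) < \<delta>" using x' t by (simp add: divide_less_eq mult.commute)
    ultimately show ?thesis by blast
  qed
  thus ?thesis using M by blast
qed

lemma bounded_preimage_from_approx_preimage:
  fixes f :: "'a::banach \<Rightarrow> 'b::real_normed_vector"
  assumes f: "bounded_linear f" and M: "M \<ge> 0"
    and approx: "\<And>y \<delta>. \<delta> > 0 \<Longrightarrow> \<exists>x. norm x \<le> M * norm y \<and> norm (y - f x) < \<delta>"
  shows "\<exists>x. f x = y \<and> norm x \<le> 2 * M * norm y"
proof (cases "y = 0")
  case True thus ?thesis using f by (intro exI[of _ 0]) (simp add: linear_0[OF bounded_linear.linear[OF f]])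
next
  case False
  define g where "g = (\<lambda>y \<delta>. SOME x. norm x \<le> M * norm y \<and> norm (y - f x) < \<delta>)"
  have g: "norm (g y \<delta>) \<le> M * norm y \<and> norm (y - f (g y \<delta>)) < \<delta>" if "\<delta> > 0" for y \<delta>
    unfolding g_def by (rule someI_ex) (use approx[OF that] in blast)
  \<comment> \<open>successive approximation: \<open>xs k\<close> approximates the residual \<open>ys k\<close> up to \<open>\<parallel>y\<parallel> / 2\<^sup>k\<^sup>+\<^sup>1\<close>\<close>
  define ys where "ys = rec_nat y (\<lambda>k z. z - f (g z (norm y / 2 ^ Suc k)))"
  define xs where "xs k = g (ys k) (norm y / 2 ^ Suc k)" for k
  have ys0: "ys 0 = y" by (simp add: ys_def)
  have ysS: "ys (Suc k) = ys k - f (xs k)" for k by (simp add: ys_def xs_def)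
  have ys_bound: "norm (ys k) \<le> norm y * (1/2) ^ k" for k
  proof (cases k)
    case (Suc j)
    have "norm (ys (Suc j)) < norm y / 2 ^ Suc j"
      unfolding ysS xs_def using g False by simp
    thus ?thesis using Suc by (simp add: power_one_over)
  qed (simp add: ys0)
  have xs_bound: "norm (xs k) \<le> M * norm y * (1/2) ^ k" for k
  proof -
    have "norm (xs k) \<le> M * norm (ys k)" unfolding xs_def using g False by simp
    also have "\<dots> \<le> M * norm y * (1/2) ^ k" using mult_left_mono[OF ys_bound M] by (simp add: mult.assoc)
    finally show ?thesis .
  qed
  have sg: "summable (\<lambda>k. M * norm y * (1/2::real) ^ k)"
    by (intro summable_mult summable_geometric) simp
  have sn: "summable (\<lambda>k. norm (xs k))"
    by (rule summable_comparison_test[OF _ sg]) (use xs_bound in auto)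
  have "ys \<longlonglongrightarrow> 0"
    by (rule Lim_null_comparison[OF always_eventually[OF allI[OF ys_bound]]])
       (intro tendsto_mult_right_zero LIMSEQ_realpow_zero, auto)
  hence "(\<lambda>k. ys k - ys (Suc k)) sums (ys 0 - 0)" by (rule telescope_sums')
  moreover have "(\<lambda>k. ys k - ys (Suc k)) = (\<lambda>k. f (xs k))" by (simp add: ysS)
  ultimately have "(\<lambda>k. f (xs k)) sums y" by (simp add: ys0)
  moreover have "f (suminf xs) = (\<Sum>k. f (xs k))"
    by (rule bounded_linear.suminf[OF f summable_norm_cancel[OF sn]])
  ultimately have "f (suminf xs) = y" by (simp add: sums_iff)
  moreover have "norm (suminf xs) \<le> 2 * M * norm y"
  proof -
    have "norm (suminf xs) \<le> (\<Sum>k. norm (xs k))" by (rule summable_norm[OF sn])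
    also have "\<dots> \<le> (\<Sum>k. M * norm y * (1/2) ^ k)" by (rule suminf_le[OF xs_bound sn sg])
    also have "\<dots> = 2 * M * norm y" using suminf_geometric[of "1/2::real"] by (simp add: suminf_mult)
    finally show ?thesis .
  qed
  ultimately show ?thesis by blast
qed

lemma surj_bounded_linear_bounded_preimage:
  fixes f :: "'a::banach \<Rightarrow> 'b::banach"
  assumes "bounded_linear f" "surj f"
  shows "\<exists>C>0. \<forall>y. \<exists>x. f x = y \<and> norm x \<le> C * norm y"
proof -
  obtain M where "M > 0" "\<And>y \<delta>. \<delta> > 0 \<Longrightarrow> \<exists>x. norm x \<le> M * norm y \<and> norm (y - f x) < \<delta>"
    using surj_linear_approx_preimage assms bounded_linear.linear by blast
  thus ?thesis using bounded_preimage_from_approx_preimage[OF assms(1)]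
    by (metis less_eq_real_def mult_pos_pos zero_less_numeral)
qed

lemma bounded_linear_factor_through_surj:
  fixes f :: "'a::banach \<Rightarrow> 'b::banach" and g :: "'a \<Rightarrow> 'c::real_normed_vector"
  assumes f: "bounded_linear f" "surj f" and g: "bounded_linear g"
    and ker: "\<And>x. f x = 0 \<Longrightarrow> g x = 0"
  shows "\<exists>h. bounded_linear h \<and> (\<forall>x. g x = h (f x))"
proof -
  interpret f: bounded_linear f by (rule f(1))
  interpret g: bounded_linear g by (rule g)
  obtain C where C: "\<And>y. \<exists>x. f x = y \<and> norm x \<le> C * norm y"
    using surj_bounded_linear_bounded_preimage[OF f] by blast
  obtain K where K: "\<And>x. norm (g x) \<le> norm x * K" "K > 0" using g.pos_bounded by blast
  define h where "h y = g (SOME x. f x = y)" for y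
  have hf: "h y = g x" if "f x = y" for x y
  proof -
    have "f (SOME x. f x = y) = y" using someI[of "\<lambda>x. f x = y" x] that by blast
    hence "g ((SOME x. f x = y) - x) = 0" using that by (simp add: f.diff ker)
    thus ?thesis by (simp add: h_def g.diff)
  qed
  have "bounded_linear h"
  proof (rule bounded_linear_intro[where K="C * K"])
    fix a b
    obtain x x' where a: "f x = a" and b: "f x' = b" using f(2) by (metis surjD)
    have "h (a + b) = g (x + x')" by (rule hf) (simp add: f.add a b)
    then show "h (a + b) = h a + h b" by (simp add: g.add hf[OF a] hf[OF b])
  next
    fix r a
    obtain x where a: "f x = a" using f(2) by (metis surjD)
    have "h (r *\<^sub>R a) = g (r *\<^sub>R x)" by (rule hf) (simp add: f.scaleR a)
    then show "h (r *\<^sub>R a) = r *\<^sub>R h a" by (simp add: g.scaleR hf[OF a])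
  next
    fix y
    obtain x where x: "f x = y" "norm x \<le> C * norm y" using C by blast
    have "norm (h y) \<le> norm x * K" using hf[OF x(1)] K(1) by simp
    also have "\<dots> \<le> norm y * (C * K)" using x(2) K(2) by (simp add: mult_right_mono algebra_simps)
    finally show "norm (h y) \<le> norm y * (C * K)" .
  qed
  thus ?thesis using hf by metis
qed

section \<open>Complex inner product spaces\<close>

locale complex_inner_space =
  fixes sc :: "complex \<Rightarrow> 'a::banach \<Rightarrow> 'a" and ip :: "'a \<Rightarrow> 'a \<Rightarrow> complex"
  assumes hilbert: "complex_hilbert sc ip"
begin

sublocale vs: vector_space sc
  using hilbert by (metis complex_hilbert_def)

lemma ip_add_left: "ip (x + y) z = ip x z + ip y z"
  using hilbert by (metis complex_hilbert_def)

lemma ip_scale_left: "ip (sc c x) y = c * ip x y"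
  using hilbert by (metis complex_hilbert_def)

lemma ip_conj: "ip y x = cnj (ip x y)"
  using hilbert by (metis complex_hilbert_def)

lemma norm_eq_sqrt_ip: "norm x = sqrt (Re (ip x x))"
  using hilbert by (metis complex_hilbert_def)

lemma ip_zero_left: "ip 0 z = 0"
  using ip_add_left[of 0 0 z] by simp

lemma ip_diff_left: "ip (x - y) z = ip x z - ip y z"
  using ip_add_left[of "x - y" y z] by simp

lemma ip_sum_left: "ip (\<Sum>i\<in>A. f i) z = (\<Sum>i\<in>A. ip (f i) z)"
  by (induction A rule: infinite_finite_induct) (simp_all add: ip_zero_left ip_add_left)

lemma ip_add_right: "ip z (x + y) = ip z x + ip z y"
  by (simp add: ip_conj[of z] ip_add_left)

lemma ip_diff_right: "ip z (x - y) = ip z x - ip z y"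
  by (simp add: ip_conj[of z] ip_diff_left)

lemma ip_scale_right: "ip x (sc c y) = cnj c * ip x y"
  by (simp add: ip_conj[of x] ip_scale_left)

lemma ip_sum_right: "ip z (\<Sum>i\<in>A. f i) = (\<Sum>i\<in>A. ip z (f i))"
  by (simp add: ip_conj[of z] ip_sum_left cnj_sum)

lemma ip_self_eq_0: "ip x x = 0 \<Longrightarrow> x = 0"
  using norm_eq_sqrt_ip[of x] by simp

lemma Re_ip_self: "Re (ip x x) = (norm x)\<^sup>2"
proof -
  have "Re (ip x x) \<ge> 0" using norm_eq_sqrt_ip[of x] by (metis norm_ge_zero real_sqrt_lt_0_iff not_le)
  thus ?thesis using norm_eq_sqrt_ip[of x] by simp
qed

lemma ip_polarization:
  "ip x y = complex_of_real (((norm (x + y))\<^sup>2 - (norm (x - y))\<^sup>2) / 4)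
     + \<i> * complex_of_real (((norm (x + sc \<i> y))\<^sup>2 - (norm (x - sc \<i> y))\<^sup>2) / 4)"
proof -
  have Re_ip: "Re (ip x z) = ((norm (x + z))\<^sup>2 - (norm (x - z))\<^sup>2) / 4" for z
    using ip_conj[of x z]
    by (simp add: Re_ip_self[symmetric] ip_add_left ip_add_right ip_diff_left ip_diff_right)
  show ?thesis
    using Re_ip[of y] Re_ip[of "sc \<i> y"] by (simp add: ip_scale_right complex_eq_iff)
qed

lemma tendsto_ip_left: "(f \<longlongrightarrow> l) F \<Longrightarrow> ((\<lambda>x. ip (f x) y) \<longlongrightarrow> ip l y) F"
  unfolding ip_polarization[of _ y] by (intro tendsto_intros) auto

lemma holomorphic_on_ip_left:
  assumes g: "vholo_on sc g U" and U: "open U"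
  shows "(\<lambda>w. ip (g w) y) holomorphic_on U"
proof -
  have "(\<lambda>w. ip (g w) y) field_differentiable at z" if z: "z \<in> U" for z
  proof -
    obtain d where d: "((\<lambda>h. sc (1 / h) (g (z + h) - g z)) \<longlongrightarrow> d) (at 0)"
      using g z by (auto simp: vholo_on_def)
    have "((\<lambda>h. ip (sc (1 / h) (g (z + h) - g z)) y) \<longlongrightarrow> ip d y) (at 0)"
      by (rule tendsto_ip_left[OF d])
    moreover have "ip (sc (1 / h) (g (z + h) - g z)) y = (ip (g (z + h)) y - ip (g z) y) / h" for h
      by (simp add: ip_scale_left ip_diff_left divide_inverse mult.commute)
    ultimately have "((\<lambda>w. ip (g w) y) has_field_derivative ip d y) (at z)"
      by (simp add: DERIV_def)
    thus ?thesis by (auto simp: field_differentiable_def)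
  qed
  thus ?thesis using U by (simp add: holomorphic_on_def field_differentiable_at_within)
qed

end

section \<open>Vector- and matrix-valued holomorphic functions\<close>

lemma vholo_on_bounded_linear:
  assumes R: "bdd_op sc R" and g: "vholo_on sc g U"
  shows "vholo_on sc (\<lambda>w. R (g w)) U"
  unfolding vholo_on_def
proof
  fix z assume "z \<in> U"
  then obtain d where d: "((\<lambda>h. sc (1 / h) (g (z + h) - g z)) \<longlongrightarrow> d) (at 0)"
    using g by (auto simp: vholo_on_def)
  have lin: "bounded_linear R" and sc: "\<And>c x. R (sc c x) = sc c (R x)"
    using R by (simp_all add: bdd_op_def)
  have "R (sc (1 / h) (g (z + h) - g z)) = sc (1 / h) (R (g (z + h)) - R (g z))" for h
    by (simp add: sc linear_diff[OF bounded_linear.linear[OF lin]])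
  thus "\<exists>d. ((\<lambda>h. sc (1 / h) (R (g (z + h)) - R (g z))) \<longlongrightarrow> d) (at 0)"
    using bounded_linear.tendsto[OF lin d] by auto
qed

lemma holomorphic_on_det:
  fixes F :: "complex \<Rightarrow> 'n::finite \<Rightarrow> 'n \<Rightarrow> complex"
  assumes "\<And>i j. (\<lambda>z. F z i j) holomorphic_on S"
  shows "(\<lambda>z. det (\<chi> i j. F z i j)) holomorphic_on S"
proof -
  have "det (\<chi> i j. F z i j) =
      (\<Sum>p\<in>{p. p permutes UNIV}. of_int (sign p) * (\<Prod>i\<in>UNIV. F z i (p i)))" for z
    by (simp add: det_def)
  then show ?thesis
    by (simp only:) (intro holomorphic_on_sum holomorphic_on_mult holomorphic_on_const
        holomorphic_on_prod assms)
qed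

lemma continuous_on_eq_at_point:
  fixes f g :: "'a::{perfect_space,t2_space} \<Rightarrow> 'b::t2_space"
  assumes "continuous_on U f" "continuous_on U g" "open U" "a \<in> U"
    and "\<And>z. z \<in> U \<Longrightarrow> z \<noteq> a \<Longrightarrow> f z = g z"
  shows "f a = g a"
proof -
  have "isCont f a" "isCont g a" using assms(1-4) by (simp_all add: continuous_on_eq_continuous_at)
  have "(g \<longlongrightarrow> g a) (at a)" using \<open>isCont g a\<close> by (rule isContD)
  moreover have "eventually (\<lambda>z. g z = f z) (at a)"
    using assms(3-5) by (auto simp: eventually_at_topological)
  ultimately have "(f \<longlongrightarrow> g a) (at a)" by (rule Lim_transform_eventually)
  moreover have "(f \<longlongrightarrow> f a) (at a)" using \<open>isCont f a\<close> by (rule isContD)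
  ultimately show ?thesis by (rule tendsto_unique[OF at_neq_bot, rotated])
qed

lemma holomorphic_on_linear_solution:
  fixes A :: "complex \<Rightarrow> complex^'n^'n" and b x :: "complex \<Rightarrow> complex^'n"
  assumes A: "\<And>i j. (\<lambda>z. A z $ i $ j) holomorphic_on V" and b: "\<And>i. (\<lambda>z. b z $ i) holomorphic_on V"
    and det: "\<And>z. z \<in> V \<Longrightarrow> det (A z) \<noteq> 0" and sol: "\<And>z. z \<in> V \<Longrightarrow> A z *v x z = b z"
  shows "(\<lambda>z. x z $ k) holomorphic_on V"
proof -
  define N where "N z = (\<chi> i j. if j = k then b z $ i else A z $ i $ j)" for z
  have "(\<lambda>z. det (N z) / det (A z)) holomorphic_on V"
  proof (intro holomorphic_on_divide det)
    show "(\<lambda>z. det (A z)) holomorphic_on V"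
      using holomorphic_on_det[of "\<lambda>z i j. A z $ i $ j", OF A] by simp
    show "(\<lambda>z. det (N z)) holomorphic_on V"
      unfolding N_def
    proof (rule holomorphic_on_det)
      show "(\<lambda>z. if j = k then b z $ i else A z $ i $ j) holomorphic_on V" for i j
        by (cases "j = k") (simp_all add: A b)
    qed
  qed
  moreover have "x z $ k = det (N z) / det (A z)" if "z \<in> V" for z
    using cramer[OF det[OF that], of "x z" "b z"] sol[OF that] by (simp add: N_def)
  ultimately show ?thesis by (metis (no_types, lifting) holomorphic_cong)
qed

section \<open>Holomorphic eigenvector frames\<close>

locale holomorphic_eigenframe = complex_inner_space sc ip
  for sc :: "complex \<Rightarrow> 'a::banach \<Rightarrow> 'a" and ip +
  fixes \<Omega> :: "complex set" and T :: "'a \<Rightarrow> 'a" and \<gamma> :: "'m::finite \<Rightarrow> complex \<Rightarrow> 'a"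
  assumes open_\<Omega>: "open \<Omega>" and zero_in_\<Omega>: "0 \<in> \<Omega>"
    and T_bdd: "bdd_op sc T" and T_surj: "surj T"
    and \<gamma>_holo: "\<And>j. vholo_on sc (\<gamma> j) \<Omega>"
    and \<gamma>_basis: "\<And>w. w \<in> \<Omega> \<Longrightarrow>
        inj (\<lambda>j. \<gamma> j w) \<and>
        \<not> vs.dependent (range (\<lambda>j. \<gamma> j w)) \<and>
        vs.span (range (\<lambda>j. \<gamma> j w)) = op_ker (shift_op sc T w)"
begin

abbreviation "\<rho> \<equiv> rho sc \<gamma>"
abbreviation "\<Phi> \<equiv> PhiT sc \<gamma>"

definition commutant :: "('a \<Rightarrow> 'a) set" where
  "commutant = {R. bdd_op sc R \<and> R \<circ> T = T \<circ> R}"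

lemma commutant_bounded_linear: "R \<in> commutant \<Longrightarrow> bounded_linear R"
  and commutant_scale: "R \<in> commutant \<Longrightarrow> R (sc c x) = sc c (R x)"
  and commutant_commute: "R \<in> commutant \<Longrightarrow> R (T x) = T (R x)"
  by (simp_all add: commutant_def bdd_op_def fun_eq_iff)

lemma T_bounded_linear: "bounded_linear T"
  and T_scale: "T (sc c x) = sc c (T x)"
  using T_bdd by (simp_all add: bdd_op_def)

lemma T_funpow_0: "(T ^^ n) 0 = 0"
  by (induction n) (simp_all add: linear_0[OF bounded_linear.linear[OF T_bounded_linear]])

lemma \<gamma>_eigen: "w \<in> \<Omega> \<Longrightarrow> T (\<gamma> j w) = sc w (\<gamma> j w)"
  using \<gamma>_basis[of w] vs.span_base[of "\<gamma> j w" "range (\<lambda>j. \<gamma> j w)"]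
  by (auto simp: op_ker_def shift_op_def)

lemma rho_eigen: "w \<in> \<Omega> \<Longrightarrow> T (\<rho> w v) = sc w (\<rho> w v)"
  by (simp add: rho_def linear_sum[OF bounded_linear.linear[OF T_bounded_linear]] T_scale
      \<gamma>_eigen vs.scale_sum_right mult.commute)

lemma rho_funpow_eigen: "w \<in> \<Omega> \<Longrightarrow> (T ^^ n) (\<rho> w v) = sc (w ^ n) (\<rho> w v)"
  by (induction n) (simp_all add: rho_eigen T_scale mult.commute)

lemma rho_diff: "\<rho> w (a - b) = \<rho> w a - \<rho> w b"
  by (simp add: rho_def vs.scale_left_diff_distrib sum_subtractf)

lemma scale_rho: "sc c (\<rho> w a) = \<rho> w (c *s a)"
  by (simp add: rho_def vs.scale_sum_right)

lemma rho_axis: "\<rho> w (axis j 1) = \<gamma> j w"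
proof -
  have "\<rho> w (axis j 1) = (\<Sum>i\<in>UNIV. if i = j then \<gamma> j w else 0)"
    unfolding rho_def by (rule sum.cong) (auto simp: axis_def)
  thus ?thesis by simp
qed

lemma rho_eq_0_imp:
  assumes w: "w \<in> \<Omega>" and v: "\<rho> w v = 0"
  shows "v = 0"
proof (rule ccontr)
  assume "v \<noteq> 0"
  then obtain j where j: "v $ j \<noteq> 0" by (auto simp: vec_eq_iff)
  let ?g = "\<lambda>j. \<gamma> j w"
  have inj: "inj ?g" using \<gamma>_basis[OF w] by blast
  define u where "u x = v $ inv ?g x" for x
  have "(\<Sum>x\<in>range ?g. sc (u x) x) = 0"
    using v by (simp add: sum.reindex[OF inj] u_def rho_def inv_f_f[OF inj])
  moreover have "u (?g j) \<noteq> 0" using j by (simp add: u_def inv_f_f[OF inj])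
  moreover have fin: "finite (range ?g)" by simp
  ultimately have "vs.dependent (range ?g)"
    unfolding vs.dependent_finite[OF fin] by blast
  thus False using \<gamma>_basis[OF w] by blast
qed

lemma eigenvector_in_range_rho:
  assumes w: "w \<in> \<Omega>" and x: "T x = sc w x"
  shows "\<exists>v. x = \<rho> w v"
proof -
  let ?g = "\<lambda>j. \<gamma> j w"
  have inj: "inj ?g" using \<gamma>_basis[OF w] by blast
  have "x \<in> vs.span (range ?g)" using \<gamma>_basis[OF w] x by (simp add: op_ker_def shift_op_def)
  then obtain u where "x = (\<Sum>y\<in>range ?g. sc (u y) y)"
    using vs.span_finite[of "range ?g"] by auto
  hence "x = \<rho> w (\<chi> j. u (?g j))" by (simp add: sum.reindex[OF inj] rho_def)
  thus ?thesis by blast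
qed

lemma PhiT_eqI:
  assumes w: "w \<in> \<Omega>" and M: "\<And>v. R (\<rho> w v) = \<rho> w (M *v v)"
  shows "\<Phi> R w = M"
  unfolding PhiT_def
proof (rule the_equality)
  show "\<forall>v. R (\<rho> w v) = \<rho> w (M *v v)" using M by blast
  fix M' assume M': "\<forall>v. R (\<rho> w v) = \<rho> w (M' *v v)"
  have "\<rho> w (M' *v v - M *v v) = 0" for v using M M' by (simp add: rho_diff)
  hence "M' *v v = M *v v" for v using rho_eq_0_imp[OF w] by fastforce
  thus "M' = M" by (simp add: matrix_eq)
qed

lemma PhiT_intertwines:
  assumes R: "R \<in> commutant" and w: "w \<in> \<Omega>"
  shows "R (\<rho> w v) = \<rho> w (\<Phi> R w *v v)"
proof -
  have "\<exists>c. R (\<gamma> j w) = \<rho> w c" for j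
    by (rule eigenvector_in_range_rho[OF w])
       (simp add: commutant_commute[OF R, symmetric] \<gamma>_eigen[OF w] commutant_scale[OF R])
  then obtain c where c: "\<And>j. R (\<gamma> j w) = \<rho> w (c j)" by metis
  define M where "M = (\<chi> i j. c j $ i)"
  have M: "R (\<rho> w v) = \<rho> w (M *v v)" for v
  proof -
    have "R (\<rho> w v) = (\<Sum>j\<in>UNIV. \<Sum>i\<in>UNIV. sc (v $ j * c j $ i) (\<gamma> i w))"
      by (simp add: rho_def linear_sum[OF bounded_linear.linear[OF commutant_bounded_linear[OF R]]]
          commutant_scale[OF R] c vs.scale_sum_right)
    also have "\<dots> = (\<Sum>i\<in>UNIV. \<Sum>j\<in>UNIV. sc (v $ j * c j $ i) (\<gamma> i w))"
      by (rule sum.swap)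
    also have "\<dots> = \<rho> w (M *v v)"
      by (simp add: rho_def M_def matrix_vector_mult_def vs.scale_sum_left mult.commute)
    finally show ?thesis .
  qed
  hence "\<Phi> R w = M" by (rule PhiT_eqI[OF w])
  thus ?thesis using M by simp
qed

lemma commutant_apply_\<gamma>:
  assumes "R \<in> commutant" "w \<in> \<Omega>"
  shows "R (\<gamma> j w) = (\<Sum>i\<in>UNIV. sc (\<Phi> R w $ i $ j) (\<gamma> i w))"
proof -
  have "R (\<gamma> j w) = \<rho> w (\<Phi> R w *v axis j 1)"
    using PhiT_intertwines[OF assms, of "axis j 1"] by (simp add: rho_axis)
  also have "\<dots> = (\<Sum>i\<in>UNIV. sc (\<Phi> R w $ i $ j) (\<gamma> i w))"
    unfolding rho_def by (simp add: matrix_vector_mult_def axis_def if_distrib cong: if_cong)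
  finally show ?thesis .
qed

lemma PhiT_comp_funpow:
  assumes R: "R \<in> commutant" and S: "\<And>x. S x = R ((T ^^ n) x)" and w: "w \<in> \<Omega>"
  shows "\<Phi> S w = (\<chi> i j. w ^ n * \<Phi> R w $ i $ j)"
proof (rule PhiT_eqI[OF w])
  fix v
  have "S (\<rho> w v) = sc (w ^ n) (R (\<rho> w v))"
    by (simp add: S rho_funpow_eigen[OF w] commutant_scale[OF R])
  also have "\<dots> = \<rho> w ((w ^ n) *s (\<Phi> R w *v v))"
    by (simp add: PhiT_intertwines[OF R w] scale_rho)
  also have "(w ^ n) *s (\<Phi> R w *v v) = (\<chi> i j. w ^ n * \<Phi> R w $ i $ j) *v v"
    by (simp add: vec_eq_iff matrix_vector_mult_def sum_distrib_left mult.assoc)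
  finally show "S (\<rho> w v) = \<rho> w ((\<chi> i j. w ^ n * \<Phi> R w $ i $ j) *v v)" .
qed

definition frame_pairing :: "complex \<Rightarrow> complex^'m^'m" where
  "frame_pairing z = (\<chi> k i. ip (\<gamma> i z) (\<gamma> k 0))"

lemma det_frame_pairing_0: "det (frame_pairing 0) \<noteq> 0"
proof -
  have "x = 0" if x: "frame_pairing 0 *v x = 0" for x
  proof -
    have "ip (\<rho> 0 x) (\<gamma> k 0) = (frame_pairing 0 *v x) $ k" for k
      by (simp add: rho_def ip_sum_left ip_scale_left frame_pairing_def matrix_vector_mult_def
          mult.commute)
    hence "ip (\<rho> 0 x) (\<gamma> k 0) = 0" for k using x by simp
    hence "ip (\<rho> 0 x) (\<rho> 0 x) = 0"
      by (simp add: rho_def[of _ _ 0 x] ip_sum_right ip_scale_right)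
    thus ?thesis using rho_eq_0_imp[OF zero_in_\<Omega>] ip_self_eq_0 by blast
  qed
  hence "invertible (frame_pairing 0)"
    unfolding invertible_left_inverse matrix_left_invertible_ker by blast
  thus ?thesis by (simp add: invertible_det_nz)
qed

lemma frame_pairing_mult_PhiT_column:
  assumes "R \<in> commutant" "z \<in> \<Omega>"
  shows "frame_pairing z *v (\<chi> i. \<Phi> R z $ i $ j) = (\<chi> k. ip (R (\<gamma> j z)) (\<gamma> k 0))"
  by (simp add: vec_eq_iff commutant_apply_\<gamma>[OF assms] ip_sum_left ip_scale_left
      frame_pairing_def matrix_vector_mult_def mult.commute)

lemma PhiT_holomorphic_near_0:
  assumes R: "R \<in> commutant"
  obtains V where "open V" "0 \<in> V" "V \<subseteq> \<Omega>" "\<And>i j. (\<lambda>z. \<Phi> R z $ i $ j) holomorphic_on V"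
proof
  let ?V = "\<Omega> \<inter> (\<lambda>z. det (frame_pairing z)) -` (- {0})"
  have pairing_holo: "(\<lambda>z. frame_pairing z $ k $ i) holomorphic_on \<Omega>" for k i
    unfolding frame_pairing_def by (simp add: holomorphic_on_ip_left[OF \<gamma>_holo open_\<Omega>])
  have "(\<lambda>z. det (frame_pairing z)) holomorphic_on \<Omega>"
    using holomorphic_on_det[of "\<lambda>z k i. frame_pairing z $ k $ i", OF pairing_holo] by simp
  thus "open ?V"
    by (intro continuous_open_preimage holomorphic_on_imp_continuous_on open_\<Omega>) auto
  show "0 \<in> ?V" "?V \<subseteq> \<Omega>" using zero_in_\<Omega> det_frame_pairing_0 by auto
  fix i j
  have "(\<lambda>z. (\<chi> i. \<Phi> R z $ i $ j) $ i) holomorphic_on ?V"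
  proof (rule holomorphic_on_linear_solution)
    show "(\<lambda>z. frame_pairing z $ k $ i) holomorphic_on ?V" for k i
      using pairing_holo holomorphic_on_subset by blast
    show "(\<lambda>z. (\<chi> k. ip (R (\<gamma> j z)) (\<gamma> k 0)) $ k) holomorphic_on ?V" for k
      using holomorphic_on_ip_left[OF vholo_on_bounded_linear[OF _ \<gamma>_holo] open_\<Omega>] R
        holomorphic_on_subset by (simp add: commutant_def) blast
  qed (auto intro: frame_pairing_mult_PhiT_column[OF R])
  thus "(\<lambda>z. \<Phi> R z $ i $ j) holomorphic_on ?V" by simp
qed

lemma commutant_factor_through_T:
  assumes S: "S \<in> commutant" and ker: "\<And>x. T x = 0 \<Longrightarrow> S x = 0"
  obtains R where "R \<in> commutant" "\<And>x. S x = R (T x)"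
proof -
  obtain R where R: "bounded_linear R" "\<And>x. S x = R (T x)"
    using bounded_linear_factor_through_surj[OF T_bounded_linear T_surj
        commutant_bounded_linear[OF S] ker] by blast
  have "R (sc c y) = sc c (R y)" "R (T y) = T (R y)" for c y
  proof -
    obtain x where x: "y = T x" using T_surj by (metis surjD)
    show "R (sc c y) = sc c (R y)"
      by (simp add: x T_scale[symmetric] R(2)[symmetric] commutant_scale[OF S])
    show "R (T y) = T (R y)" by (simp add: x R(2)[symmetric] commutant_commute[OF S])
  qed
  hence "R \<in> commutant" using R(1) by (simp add: commutant_def bdd_op_def fun_eq_iff)
  thus ?thesis using R(2) that by blast
qed

lemma commutant_factor_through_funpow:
  assumes "S \<in> commutant" "\<And>x. (T ^^ n) x = 0 \<Longrightarrow> S x = 0"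
  obtains R where "R \<in> commutant" "\<And>x. S x = R ((T ^^ n) x)"
  using assms
proof (induction n arbitrary: S thesis)
  case 0 thus ?case by simp
next
  case (Suc n)
  have "S x = 0" if "T x = 0" for x
    using Suc.prems(3)[of x] that T_funpow_0 by (simp add: funpow_swap1)
  then obtain R1 where R1: "R1 \<in> commutant" "\<And>x. S x = R1 (T x)"
    using commutant_factor_through_T[OF Suc.prems(2)] by blast
  have "R1 y = 0" if "(T ^^ n) y = 0" for y
  proof -
    obtain x where "y = T x" using T_surj by (metis surjD)
    thus ?thesis using Suc.prems(3)[of x] that R1(2) by (simp add: funpow_swap1)
  qed
  then obtain R where "R \<in> commutant" "\<And>x. R1 x = R ((T ^^ n) x)"
    using Suc.IH[OF _ R1(1)] by blast
  thus ?case using Suc.prems(1) R1(2) by (simp add: funpow_swap1)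
qed

lemma commutant_vanishes_on_ker_T:
  assumes S: "S \<in> commutant" and "\<Phi> S 0 = 0" "T x = 0"
  shows "S x = 0"
proof -
  obtain v where "x = \<rho> 0 v" using eigenvector_in_range_rho[OF zero_in_\<Omega>] assms(3) by auto
  thus ?thesis using PhiT_intertwines[OF S zero_in_\<Omega>, of v] assms(2)
    by (simp add: scale_rho[of 0, symmetric]) (simp add: rho_def)
qed

lemma PhiT_divisible_if_vanishes_on_ker:
  assumes S: "S \<in> commutant" and ker: "\<forall>x. (T ^^ n) x = 0 \<longrightarrow> S x = 0"
  shows "\<exists>\<Psi> :: complex \<Rightarrow> complex^'m^'m. \<exists>U. open U \<and> 0 \<in> U \<and> U \<subseteq> \<Omega> \<and>
            (\<forall>i j. (\<lambda>z. \<Psi> z $ i $ j) holomorphic_on U) \<and>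
            (\<forall>w\<in>U. \<Phi> S w = (\<chi> i j. w ^ n * \<Psi> w $ i $ j))"
proof -
  obtain R where R: "R \<in> commutant" "\<And>x. S x = R ((T ^^ n) x)"
    using commutant_factor_through_funpow[OF S] ker by blast
  obtain V where "open V" "0 \<in> V" "V \<subseteq> \<Omega>" "\<And>i j. (\<lambda>z. \<Phi> R z $ i $ j) holomorphic_on V"
    using PhiT_holomorphic_near_0[OF R(1)] by blast
  thus ?thesis using PhiT_comp_funpow[OF R] by blast
qed

lemma PhiT_divisible_after_factoring_T:
  assumes R: "R \<in> commutant" and S: "\<And>x. S x = R (T x)"
    and U: "open U" "0 \<in> U" "U \<subseteq> \<Omega>" and \<Psi>: "\<And>i j. (\<lambda>z. \<Psi> z $ i $ j) holomorphic_on U"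
    and div: "\<And>w. w \<in> U \<Longrightarrow> \<Phi> S w = (\<chi> i j. w ^ Suc n * \<Psi> w $ i $ j)"
  obtains V where "open V" "0 \<in> V" "V \<subseteq> U" "\<And>w. w \<in> V \<Longrightarrow> \<Phi> R w = (\<chi> i j. w ^ n * \<Psi> w $ i $ j)"
proof -
  obtain V where V: "open V" "0 \<in> V" "V \<subseteq> \<Omega>" "\<And>i j. (\<lambda>z. \<Phi> R z $ i $ j) holomorphic_on V"
    using PhiT_holomorphic_near_0[OF R] by blast
  let ?V = "U \<inter> V"
  have V': "open ?V" "0 \<in> ?V" using U(1,2) V(1,2) by auto
  have off_0: "\<Phi> R w $ i $ j = w ^ n * \<Psi> w $ i $ j" if w: "w \<in> ?V" "w \<noteq> 0" for w i j
  proof -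
    have "\<Phi> S w = (\<chi> i j. w ^ 1 * \<Phi> R w $ i $ j)"
      using w U(3) by (intro PhiT_comp_funpow[OF R]) (auto simp: S)
    hence "\<Phi> S w $ i $ j = w * \<Phi> R w $ i $ j" by simp
    moreover have "\<Phi> S w $ i $ j = w * (w ^ n * \<Psi> w $ i $ j)"
      using w div by (simp add: mult.assoc)
    ultimately have "w * \<Phi> R w $ i $ j = w * (w ^ n * \<Psi> w $ i $ j)" by auto
    thus ?thesis using w(2) by simp
  qed
  have "\<Phi> R w $ i $ j = w ^ n * \<Psi> w $ i $ j" if "w \<in> ?V" for w i j
  proof (cases "w = 0")
    case True
    have "continuous_on ?V (\<lambda>z. \<Phi> R z $ i $ j)"
      by (intro holomorphic_on_imp_continuous_on holomorphic_on_subset[OF V(4)]) auto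
    moreover have "continuous_on ?V (\<lambda>z. z ^ n * \<Psi> z $ i $ j)"
      by (intro continuous_intros holomorphic_on_imp_continuous_on holomorphic_on_subset[OF \<Psi>]) auto
    ultimately show ?thesis
      using continuous_on_eq_at_point[OF _ _ V'] off_0 True by blast
  qed (use off_0 that in blast)
  hence "\<And>w. w \<in> ?V \<Longrightarrow> \<Phi> R w = (\<chi> i j. w ^ n * \<Psi> w $ i $ j)" by (simp add: vec_eq_iff)
  thus ?thesis using that V' by blast
qed

lemma vanishes_on_ker_if_PhiT_divisible:
  assumes "S \<in> commutant" "open U" "0 \<in> U" "U \<subseteq> \<Omega>"
    and "\<And>i j. (\<lambda>z. \<Psi> z $ i $ j) holomorphic_on U"
    and "\<And>w. w \<in> U \<Longrightarrow> \<Phi> S w = (\<chi> i j. w ^ n * \<Psi> w $ i $ j)"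
    and "(T ^^ n) x = 0"
  shows "S x = 0"
  using assms
proof (induction n arbitrary: S U x)
  case 0 thus ?case by (simp add: linear_0[OF bounded_linear.linear[OF commutant_bounded_linear]])
next
  case (Suc n)
  have "\<Phi> S 0 = 0" using Suc.prems(3,6) by (simp add: vec_eq_iff)
  then obtain R where R: "R \<in> commutant" "\<And>x. S x = R (T x)"
    using commutant_factor_through_T[OF Suc.prems(1)] commutant_vanishes_on_ker_T[OF Suc.prems(1)]
    by blast
  then obtain V where V: "open V" "0 \<in> V" "V \<subseteq> U"
    "\<And>w. w \<in> V \<Longrightarrow> \<Phi> R w = (\<chi> i j. w ^ n * \<Psi> w $ i $ j)"
    using PhiT_divisible_after_factoring_T[OF R Suc.prems(2-6)] by blast
  have "V \<subseteq> \<Omega>" using V(3) Suc.prems(4) by blast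
  hence "R y = 0" if "(T ^^ n) y = 0" for y
    using Suc.IH[OF R(1) V(1,2) _ holomorphic_on_subset[OF Suc.prems(5) V(3)] V(4) that] by blast
  thus ?case using Suc.prems(7) R(2) by (simp add: funpow_swap1)
qed

lemma vanishes_on_ker_funpow_iff_PhiT_divisible:
  assumes S: "S \<in> commutant"
  shows "(\<forall>x. (T ^^ n) x = 0 \<longrightarrow> S x = 0) \<longleftrightarrow>
         (\<exists>\<Psi> :: complex \<Rightarrow> complex^'m^'m. \<exists>U. open U \<and> 0 \<in> U \<and> U \<subseteq> \<Omega> \<and>
            (\<forall>i j. (\<lambda>z. \<Psi> z $ i $ j) holomorphic_on U) \<and>
            (\<forall>w\<in>U. \<Phi> S w = (\<chi> i j. w ^ n * \<Psi> w $ i $ j)))"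
    (is "?kernel \<longleftrightarrow> ?divisible")
proof
  assume ?kernel
  thus ?divisible by (rule PhiT_divisible_if_vanishes_on_ker[OF S])
next
  assume ?divisible
  then obtain \<Psi> :: "complex \<Rightarrow> complex^'m^'m" and U where U: "open U" "0 \<in> U" "U \<subseteq> \<Omega>"
    "\<And>i j. (\<lambda>z. \<Psi> z $ i $ j) holomorphic_on U" "\<And>w. w \<in> U \<Longrightarrow> \<Phi> S w = (\<chi> i j. w ^ n * \<Psi> w $ i $ j)"
    by blast
  show ?kernel using vanishes_on_ker_if_PhiT_divisible[OF S U] by blast
qed

end

text \<open>Only the Hilbert structure, openness of \<open>\<Omega> \<ni> 0\<close>, the holomorphic frame \<open>\<gamma>\<close>, and
boundedness and surjectivity of \<open>T\<close> are used; for \<open>n = 0\<close> both sides hold trivially.\<close>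

theorem lemma5p4:
  fixes sc :: "complex \<Rightarrow> 'a::banach \<Rightarrow> 'a"
    and ip :: "'a \<Rightarrow> 'a \<Rightarrow> complex"
    and \<Omega> :: "complex set"
    and T S :: "'a \<Rightarrow> 'a"
    and \<gamma> :: "'m::finite \<Rightarrow> complex \<Rightarrow> 'a"
    and n :: nat
  assumes H: "complex_hilbert sc ip" "separable_sp TYPE('a)"
    and \<Omega>: "open \<Omega>" "connected \<Omega>" "0 \<in> \<Omega>"
    and T: "cowen_douglas sc TYPE('m) \<Omega> T"
    and \<gamma>_holo: "\<And>j. vholo_on sc (\<gamma> j) \<Omega>"
    and \<gamma>_basis: "\<And>w. w \<in> \<Omega> \<Longrightarrow>
        inj (\<lambda>j. \<gamma> j w) \<and>
        \<not> module.dependent sc (range (\<lambda>j. \<gamma> j w)) \<and>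
        module.span sc (range (\<lambda>j. \<gamma> j w)) = op_ker (shift_op sc T w)"
    and S: "bdd_op sc S" "S \<circ> T = T \<circ> S"
    and n: "n \<ge> 1"
  shows "(\<forall>x. (T ^^ n) x = 0 \<longrightarrow> S x = 0) \<longleftrightarrow>
         (\<exists>\<Psi> :: complex \<Rightarrow> complex^'m^'m. \<exists>U. open U \<and> 0 \<in> U \<and> U \<subseteq> \<Omega> \<and>
            (\<forall>i j. (\<lambda>z. \<Psi> z $ i $ j) holomorphic_on U) \<and>
            (\<forall>w\<in>U. PhiT sc \<gamma> S w = (\<chi> i j. w ^ n * \<Psi> w $ i $ j)))"
proof -
  interpret complex_inner_space sc ip by (rule complex_inner_space.intro[OF H(1)])
  have "shift_op sc T 0 = T" by (simp add: shift_op_def fun_eq_iff)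
  hence "bdd_op sc T" "surj T" using T \<Omega>(3) by (auto simp: cowen_douglas_def)
  then interpret holomorphic_eigenframe sc ip \<Omega> T \<gamma>
    by unfold_locales (simp_all add: H(1) \<Omega>(1,3) \<gamma>_holo \<gamma>_basis)
  have "S \<in> commutant" using S by (simp add: commutant_def)
  thus ?thesis by (rule vanishes_on_ker_funpow_iff_PhiT_divisible)
qed

end
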